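(* Let $\mathfrak F=(X,\parallel,Y,S_\vee)$ be a frame satisfying axioms (F0)–(F4). Then for every $x\in X$, $$S_\vee x=\overline{\eta}_S(\Gamma x)=\bigcup_{z\in\Gamma x}S_\vee z=\Gamma(\widehat\nu(x)).$$
   Context: A polarity is $(X,\parallel,Y)$ with $X,Y$ nonempty sets and ${\parallel}\subseteq X\times Y$; $I=(X\times Y)\setminus{\parallel}$. For $U\subseteq X$, $U'=\{y\in Y:\forall x\in U\;x\parallel y\}$; for $V\subseteq Y$, $V'=\{x\in X:\forall y\in V\;x\parallel y\}$. $A\subseteq X$ is stable if $A=A''$; $B\subseteq Y$ is co-stable if $B=B''$; $\mathcal G(X),\mathcal G(Y)$ are the complete lattices of stable/co-stable sets (meets = intersections, joins $\bigvee_jA_j=(\bigcup_jA_j)''$). Preorders: $x\preceq z$ iff $\{x\}'\subseteq\{z\}'$ on $X$; $y\preceq v$ iff $\{y\}'\subseteq\{v\}'$ on $Y$; the polarity is separated if both are partial orders (then written $\leq$). For a point $u$, $\Gamma u=\{w:u\preceq w\}$ (same sort). A closed element of $\mathcal G(X)$ is a set $\Gamma x$ ($x\in X$), of $\mathcal G(Y)$ a set $\Gamma y$ ($y\in Y$). A frame is $\mathfrak F=(X,\parallel,Y,S_\vee)$ with $S_\vee\subseteq Y\times X$; $S_\vee x=\{y: yS_\vee x\}$, $yS_\vee=\{x:yS_\vee x\}$; the Galois dual relation $S'_\vee\subseteq X\times X$ is $zS'_\vee x$ iff $\forall y\in Y(yS_\vee x\Rightarrow z\parallel y)$. Axioms: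 (F0) $\forall x\exists y\;xIy$ and $\forall y\exists x\;xIy$; (F1) the polarity is separated; (F2) for each $x\in X$, $S_\vee x$ is a closed element of $\mathcal G(Y)$; (F3) for each $y\in Y$, $yS_\vee$ is a down-set of $(X,\leq)$; (F4) for each $x$, $\{z: zS'_\vee x\}\in\mathcal G(X)$ and for each $z$, $\{x:zS'_\vee x\}\in\mathcal G(X)$. By (F1),(F2), $\widehat\nu(x)$ denotes the unique $y\in Y$ with $S_\vee x=\Gamma y$. For $A\in\mathcal G(X)$, $\overline\eta_S(A)=(\bigcup_{x\in A}S_\vee x)''\in\mathcal G(Y)$. *)

theory Defs
  imports Main
begin

text \<open>A polarity (X, par, Y): X :: 'x set, Y :: 'y set, par :: 'x \<Rightarrow> 'y \<Rightarrow> bool.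
  A frame adds S :: 'y \<Rightarrow> 'x \<Rightarrow> bool (the relation S_vee \<subseteq> Y \<times> X).\<close>

definition primeX :: "'y set \<Rightarrow> ('x \<Rightarrow> 'y \<Rightarrow> bool) \<Rightarrow> 'x set \<Rightarrow> 'y set" where
  "primeX Y par U = {y \<in> Y. \<forall>x\<in>U. par x y}"

definition primeY :: "'x set \<Rightarrow> ('x \<Rightarrow> 'y \<Rightarrow> bool) \<Rightarrow> 'y set \<Rightarrow> 'x set" where
  "primeY X par V = {x \<in> X. \<forall>y\<in>V. par x y}"

definition stableX :: "'x set \<Rightarrow> ('x \<Rightarrow> 'y \<Rightarrow> bool) \<Rightarrow> 'y set \<Rightarrow> 'x set \<Rightarrow> bool" where
  "stableX X par Y A \<longleftrightarrow> A \<subseteq> X \<and> A = primeY X par (primeX Y par A)"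

definition costableY :: "'x set \<Rightarrow> ('x \<Rightarrow> 'y \<Rightarrow> bool) \<Rightarrow> 'y set \<Rightarrow> 'y set \<Rightarrow> bool" where
  "costableY X par Y B \<longleftrightarrow> B \<subseteq> Y \<and> B = primeX Y par (primeY X par B)"

definition leqX :: "'x set \<Rightarrow> ('x \<Rightarrow> 'y \<Rightarrow> bool) \<Rightarrow> 'y set \<Rightarrow> 'x \<Rightarrow> 'x \<Rightarrow> bool" where
  "leqX X par Y x z \<longleftrightarrow> primeX Y par {x} \<subseteq> primeX Y par {z}"

definition leqY :: "'x set \<Rightarrow> ('x \<Rightarrow> 'y \<Rightarrow> bool) \<Rightarrow> 'y set \<Rightarrow> 'y \<Rightarrow> 'y \<Rightarrow> bool" where
  "leqY X par Y y v \<longleftrightarrow> primeY X par {y} \<subseteq> primeY X par {v}"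

definition GammaX :: "'x set \<Rightarrow> ('x \<Rightarrow> 'y \<Rightarrow> bool) \<Rightarrow> 'y set \<Rightarrow> 'x \<Rightarrow> 'x set" where
  "GammaX X par Y x = {w \<in> X. leqX X par Y x w}"

definition GammaY :: "'x set \<Rightarrow> ('x \<Rightarrow> 'y \<Rightarrow> bool) \<Rightarrow> 'y set \<Rightarrow> 'y \<Rightarrow> 'y set" where
  "GammaY X par Y y = {v \<in> Y. leqY X par Y y v}"

definition separated :: "'x set \<Rightarrow> ('x \<Rightarrow> 'y \<Rightarrow> bool) \<Rightarrow> 'y set \<Rightarrow> bool" where
  "separated X par Y \<longleftrightarrow>
     (\<forall>x\<in>X. \<forall>z\<in>X. leqX X par Y x z \<and> leqX X par Y z x \<longrightarrow> x = z) \<and>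
     (\<forall>y\<in>Y. \<forall>v\<in>Y. leqY X par Y y v \<and> leqY X par Y v y \<longrightarrow> y = v)"

definition Sx :: "'y set \<Rightarrow> ('y \<Rightarrow> 'x \<Rightarrow> bool) \<Rightarrow> 'x \<Rightarrow> 'y set" where
  "Sx Y S x = {y \<in> Y. S y x}"

definition yS :: "'x set \<Rightarrow> ('y \<Rightarrow> 'x \<Rightarrow> bool) \<Rightarrow> 'y \<Rightarrow> 'x set" where
  "yS X S y = {x \<in> X. S y x}"

definition Sdual :: "'y set \<Rightarrow> ('x \<Rightarrow> 'y \<Rightarrow> bool) \<Rightarrow> ('y \<Rightarrow> 'x \<Rightarrow> bool) \<Rightarrow> 'x \<Rightarrow> 'x \<Rightarrow> bool" where
  "Sdual Y par S z x \<longleftrightarrow> (\<forall>y\<in>Y. S y x \<longrightarrow> par z y)"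

definition frame :: "'x set \<Rightarrow> ('x \<Rightarrow> 'y \<Rightarrow> bool) \<Rightarrow> 'y set \<Rightarrow> ('y \<Rightarrow> 'x \<Rightarrow> bool) \<Rightarrow> bool" where
  "frame X par Y S \<longleftrightarrow>
     X \<noteq> {} \<and> Y \<noteq> {} \<and>
     \<comment> \<open>S_vee \<subseteq> Y \<times> X\<close>
     (\<forall>y x. S y x \<longrightarrow> y \<in> Y \<and> x \<in> X) \<and>
     \<comment> \<open>(F0)\<close>
     (\<forall>x\<in>X. \<exists>y\<in>Y. \<not> par x y) \<and> (\<forall>y\<in>Y. \<exists>x\<in>X. \<not> par x y) \<and>
     \<comment> \<open>(F1)\<close>
     separated X par Y \<and>
     \<comment> \<open>(F2)\<close>
     (\<forall>x\<in>X. \<exists>y\<in>Y. Sx Y S x = GammaY X par Y y) \<and>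
     \<comment> \<open>(F3)\<close>
     (\<forall>y\<in>Y. \<forall>x\<in>X. \<forall>z\<in>X. z \<in> yS X S y \<and> leqX X par Y x z \<longrightarrow> x \<in> yS X S y) \<and>
     \<comment> \<open>(F4)\<close>
     (\<forall>x\<in>X. stableX X par Y {z \<in> X. Sdual Y par S z x}) \<and>
     (\<forall>z\<in>X. stableX X par Y {x \<in> X. Sdual Y par S z x})"

definition nuhat :: "'x set \<Rightarrow> ('x \<Rightarrow> 'y \<Rightarrow> bool) \<Rightarrow> 'y set \<Rightarrow> ('y \<Rightarrow> 'x \<Rightarrow> bool) \<Rightarrow> 'x \<Rightarrow> 'y" where
  "nuhat X par Y S x = (THE y. y \<in> Y \<and> Sx Y S x = GammaY X par Y y)"

definition etabar :: "'x set \<Rightarrow> ('x \<Rightarrow> 'y \<Rightarrow> bool) \<Rightarrow> 'y set \<Rightarrow> ('y \<Rightarrow> 'x \<Rightarrow> bool) \<Rightarrow> 'x set \<Rightarrow> 'y set" where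
  "etabar X par Y S A = primeX Y par (primeY X par (\<Union>x\<in>A. Sx Y S x))"

end

theory Submission
  imports Defs
begin

text \<open>By (F3), \<open>S\<^sub>\<or>\<close> is antitone in its second argument, so the union of the \<open>S\<^sub>\<or>z\<close>
  over \<open>z \<in> \<Gamma>x\<close> is attained at \<open>z = x\<close>; by (F2) this is a closed element \<open>\<Gamma>y\<close> of \<open>\<G>(Y)\<close>,
  hence Galois-closed, which gives the value of \<open>\<eta>\<^sub>S\<close>; and \<open>y = \<nu>(x)\<close> because
  \<open>\<Gamma>\<close> is injective on a separated polarity.\<close>

lemma GammaY_eq_primeX_primeY: "GammaY X par Y y = primeX Y par (primeY X par {y})"
  unfolding GammaY_def leqY_def primeX_def primeY_def by auto

lemma primeX_primeY_primeX:
  assumes "V \<subseteq> X"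
  shows "primeX Y par (primeY X par (primeX Y par V)) = primeX Y par V"
  using assms unfolding primeX_def primeY_def by blast

lemma costableY_GammaY:
  assumes "y \<in> Y"
  shows "costableY X par Y (GammaY X par Y y)"
proof -
  have "primeY X par {y} \<subseteq> X" unfolding primeY_def by auto
  then show ?thesis
    unfolding costableY_def GammaY_eq_primeX_primeY
    by (simp add: primeX_primeY_primeX) (auto simp: primeX_def)
qed

lemma GammaY_refl: "y \<in> Y \<Longrightarrow> y \<in> GammaY X par Y y"
  unfolding GammaY_def leqY_def by auto

lemma GammaX_refl: "x \<in> X \<Longrightarrow> x \<in> GammaX X par Y x"
  unfolding GammaX_def leqX_def by auto

lemma GammaY_inj_on:
  assumes "separated X par Y" "y \<in> Y" "v \<in> Y" "GammaY X par Y y = GammaY X par Y v"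
  shows "y = v"
proof -
  have "leqY X par Y y v" "leqY X par Y v y"
    using assms(2-4) GammaY_refl[of v Y] GammaY_refl[of y Y] unfolding GammaY_def by blast+
  with assms(1-3) show ?thesis unfolding separated_def by blast
qed

lemma frame_Sx_antimono:
  assumes "frame X par Y S" "x \<in> X" "z \<in> X" "leqX X par Y x z"
  shows "Sx Y S z \<subseteq> Sx Y S x"
  using assms unfolding frame_def Sx_def yS_def by blast

lemma frame_UN_Sx_GammaX:
  assumes "frame X par Y S" "x \<in> X"
  shows "(\<Union>z\<in>GammaX X par Y x. Sx Y S z) = Sx Y S x"
proof
  show "(\<Union>z\<in>GammaX X par Y x. Sx Y S z) \<subseteq> Sx Y S x"
    using frame_Sx_antimono[OF assms] unfolding GammaX_def by blast
  show "Sx Y S x \<subseteq> (\<Union>z\<in>GammaX X par Y x. Sx Y S z)"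
    using GammaX_refl[OF assms(2)] by blast
qed

lemma frame_Sx_eq_GammaY_nuhat:
  assumes "frame X par Y S" "x \<in> X"
  shows "Sx Y S x = GammaY X par Y (nuhat X par Y S x)"
proof -
  obtain y where y: "y \<in> Y" "Sx Y S x = GammaY X par Y y"
    using assms unfolding frame_def by blast
  have "separated X par Y" using assms(1) unfolding frame_def by blast
  then have "nuhat X par Y S x = y"
    unfolding nuhat_def using y GammaY_inj_on by (intro the_equality) auto
  with y show ?thesis by simp
qed

lemma frame_Sx_costableY:
  assumes "frame X par Y S" "x \<in> X"
  shows "costableY X par Y (Sx Y S x)"
  using assms costableY_GammaY unfolding frame_def by metis

theorem lemma3p10:
  assumes "frame X par Y S"
    and "x \<in> X"
  shows "Sx Y S x = etabar X par Y S (GammaX X par Y x)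
       \<and> etabar X par Y S (GammaX X par Y x) = (\<Union>z\<in>GammaX X par Y x. Sx Y S z)
       \<and> (\<Union>z\<in>GammaX X par Y x. Sx Y S z) = GammaY X par Y (nuhat X par Y S x)"
proof -
  have union: "(\<Union>z\<in>GammaX X par Y x. Sx Y S z) = Sx Y S x"
    using frame_UN_Sx_GammaX[OF assms] .
  have "etabar X par Y S (GammaX X par Y x) = Sx Y S x"
    using frame_Sx_costableY[OF assms] unfolding etabar_def union costableY_def by simp
  with union frame_Sx_eq_GammaY_nuhat[OF assms] show ?thesis by simp
qed

end
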